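(* Let $J'=(z_w,z_w')$ be a nonempty open interval, let $r:J'\to\mathbb{R}$ be differentiable and non-increasing on $J'$, and let $h:J'\to\mathbb{R}$ be differentiable with $\dot h(z)=1+h(z)^2-2r(z)h(z)$ for all $z\in J'$. Assume $h$ has exactly one zero $z_*$ in $J'$. Let $G(z)=z-\dfrac{2h(z)}{2+h(z)^2-2r(z)h(z)}$ and consider the iteration $z_{n+1}=G(z_n)$, $n=0,1,2,\dots$. (1) If $r(z)>0$ for all $z\in(z_w,z_* )$, then for every initial guess $z_0\in(z_w,z_* )$ all iterates are well defined, the sequence $(z_n)$ is monotonically increasing, lies in $(z_w,z_* )$, and converges to $z_*$. (2) If $r(z)<0$ for all $z\in(z_*,z_w')$, then for every initial guess $z_0\in(z_*,z_w')$ all iterates are well defined, the sequence $(z_n)$ is monotonically decreasing, lies in $(z_*,z_w')$, and converges to $z_*$.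
   Context: $\dot h$ denotes $dh/dz$. Since $h(z_* )=0$ and $\dot h(z_* )=1$, uniqueness of the zero gives $h<0$ on $(z_w,z_* )$ and $h>0$ on $(z_*,z_w')$. (In the intended application $z_w<z_w'$ are consecutive poles of $h$.) *)

theory Defs
  imports "HOL-Analysis.Analysis"
begin

definition iter_denom :: "(real \<Rightarrow> real) \<Rightarrow> (real \<Rightarrow> real) \<Rightarrow> real \<Rightarrow> real" where
  "iter_denom r h z = 2 + (h z)^2 - 2 * r z * h z"

definition iter_G :: "(real \<Rightarrow> real) \<Rightarrow> (real \<Rightarrow> real) \<Rightarrow> real \<Rightarrow> real" where
  "iter_G r h z = z - 2 * h z / iter_denom r h z"

end

(*
  Write G_c for the iteration map with r frozen at the constant c, so that G z = G_{r z} z and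
  G_c zs = zs. The derivative of G_c is 1 - 2 h' (2 - h^2) / (2 + h^2 - 2 c h)^2, which is
  positive wherever c h <= 0, h /= 0 and 0 <= h' <= 1 + h^2 - 2 c h. Since h' = 1 at the simple
  zero zs, h is negative to the left and positive to the right of zs; on the side where r h <= 0
  the monotonicity of r turns the Riccati equation into exactly this bound between z and zs
  with c = r z. So G_{r z} is increasing there and G z lies strictly between z and zs. The
  iterates are therefore monotone and bounded by zs, and their limit is a fixed point of the
  continuous map G, which can only be zs.
*)
theory Submission
  imports Defs
begin

lemma iter_denom_pos:
  assumes "r z * h z \<le> 0"
  shows "0 < iter_denom r h z"
  using assms zero_le_power2[of "h z"] unfolding iter_denom_def by linarith

lemma iter_G_const_has_real_derivative:
  assumes "(h has_real_derivative h') (at w)" and "iter_denom (\<lambda>_. c) h w \<noteq> 0"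
  shows "(iter_G (\<lambda>_. c) h has_real_derivative
           1 - 2 * h' * (2 - (h w)^2) / (iter_denom (\<lambda>_. c) h w)^2) (at w)"
  using assms unfolding iter_G_def[abs_def] iter_denom_def
  by (auto intro!: derivative_eq_intros simp: field_simps power2_eq_square)

lemma slope_numerator_less_denom_square:
  fixes c y p :: real
  assumes "c * y \<le> 0" and "y \<noteq> 0" and "0 \<le> p" and "p \<le> 1 + y^2 - 2 * c * y"
  shows "2 * p * (2 - y^2) < (2 + y^2 - 2 * c * y)^2"
proof -
  define f where "f = 1 + y^2 - 2 * c * y"
  have "0 < y^2" using assms(2) by simp
  moreover have "1 + y^2 \<le> f" using assms(1) unfolding f_def by linarith
  ultimately have f_pos: "0 < f" by linarith
  have "2 * p * (2 - y^2) < (1 + f)^2"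
  proof (cases "0 \<le> 2 - y^2")
    case True
    have "2 * p * (2 - y^2) \<le> 2 * f * (2 - y^2)"
      using True assms(4) unfolding f_def by (simp add: mult_right_mono)
    also have "\<dots> = (1 + f)^2 - (f - 1)^2 - 2 * f * y^2"
      by (simp add: algebra_simps power2_eq_square)
    also have "\<dots> < (1 + f)^2"
      using mult_pos_pos[OF f_pos \<open>0 < y^2\<close>] zero_le_power2[of "f - 1"] by linarith
    finally show ?thesis .
  next
    case False
    then have "2 * p * (2 - y^2) \<le> 0" using assms(3) by (simp add: mult_nonneg_nonpos)
    also have "0 < (1 + f)^2" using f_pos by simp
    finally show ?thesis .
  qed
  moreover have "1 + f = 2 + y^2 - 2 * c * y" unfolding f_def by simp
  ultimately show ?thesis by simp
qed

lemma iter_G_const_increasing: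
  fixes h h' :: "real \<Rightarrow> real"
  assumes "a < b"
    and deriv: "\<And>w. a \<le> w \<Longrightarrow> w \<le> b \<Longrightarrow> (h has_real_derivative h' w) (at w)"
    and sign: "\<And>w. a \<le> w \<Longrightarrow> w \<le> b \<Longrightarrow> c * h w \<le> 0"
    and nonzero: "\<And>w. a < w \<Longrightarrow> w < b \<Longrightarrow> h w \<noteq> 0"
    and slope: "\<And>w. a < w \<Longrightarrow> w < b \<Longrightarrow> 0 \<le> h' w \<and> h' w \<le> 1 + (h w)^2 - 2 * c * h w"
  shows "iter_G (\<lambda>_. c) h a < iter_G (\<lambda>_. c) h b"
proof -
  let ?G = "iter_G (\<lambda>_. c) h" and ?D = "iter_denom (\<lambda>_. c) h"
  let ?G' = "\<lambda>w. 1 - 2 * h' w * (2 - (h w)^2) / (?D w)^2"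
  have G_deriv: "(?G has_real_derivative ?G' w) (at w)" if "a \<le> w" "w \<le> b" for w
    using iter_denom_pos[of "\<lambda>_. c" w h] sign[OF that]
    by (intro iter_G_const_has_real_derivative deriv that) simp
  show ?thesis
  proof (rule DERIV_pos_imp_increasing_open[OF \<open>a < b\<close>])
    fix w assume w: "a < w" "w < b"
    have "2 * h' w * (2 - (h w)^2) < (?D w)^2"
      using slope_numerator_less_denom_square[of c "h w" "h' w"] sign nonzero slope w
      unfolding iter_denom_def by auto
    then have "0 < ?G' w" using iter_denom_pos[of "\<lambda>_. c" w h] sign w by simp
    then show "\<exists>y. (?G has_real_derivative y) (at w) \<and> 0 < y"
      using G_deriv[of w] w by (meson less_imp_le)
  next
    show "continuous_on {a..b} ?G"
      using DERIV_isCont[OF G_deriv] by (intro continuous_at_imp_continuous_on) auto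
  qed
qed

lemma neg_before_simple_zero:
  fixes h :: "real \<Rightarrow> real"
  assumes "w < z" and "continuous_on {w..z} h" and "(h has_real_derivative D) (at z)" and "0 < D"
    and "h z = 0" and nonzero: "\<And>x. w \<le> x \<Longrightarrow> x < z \<Longrightarrow> h x \<noteq> 0"
  shows "h w < 0"
proof (rule ccontr)
  assume "\<not> h w < 0"
  obtain d where "0 < d" and d: "\<And>t. 0 < t \<Longrightarrow> t < d \<Longrightarrow> h (z - t) < 0"
    using DERIV_pos_inc_left[OF assms(3,4)] \<open>h z = 0\<close> by auto
  define t where "t = min d (z - w) / 2"
  have t: "0 < t" "t < d" "t < z - w" using \<open>0 < d\<close> \<open>w < z\<close> unfolding t_def by auto
  have "continuous_on {w..z - t} h" using assms(2) by (rule continuous_on_subset) (use t in auto)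
  then obtain x where "w \<le> x" "x \<le> z - t" "h x = 0"
    using IVT2'[of h "z - t" 0 w] d[OF t(1,2)] \<open>\<not> h w < 0\<close> t by auto
  then show False using nonzero t by force
qed

lemma pos_after_simple_zero:
  fixes h :: "real \<Rightarrow> real"
  assumes "z < w" and "continuous_on {z..w} h" and "(h has_real_derivative D) (at z)" and "0 < D"
    and "h z = 0" and nonzero: "\<And>x. z < x \<Longrightarrow> x \<le> w \<Longrightarrow> h x \<noteq> 0"
  shows "0 < h w"
proof (rule ccontr)
  assume "\<not> 0 < h w"
  obtain d where "0 < d" and d: "\<And>t. 0 < t \<Longrightarrow> t < d \<Longrightarrow> 0 < h (z + t)"
    using DERIV_pos_inc_right[OF assms(3,4)] \<open>h z = 0\<close> by auto
  define t where "t = min d (w - z) / 2"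
  have t: "0 < t" "t < d" "t < w - z" using \<open>0 < d\<close> \<open>z < w\<close> unfolding t_def by auto
  have "continuous_on {z + t..w} h" using assms(2) by (rule continuous_on_subset) (use t in auto)
  then obtain x where "z + t \<le> x" "x \<le> w" "h x = 0"
    using IVT2'[of h w 0 "z + t"] d[OF t(1,2)] \<open>\<not> 0 < h w\<close> t by auto
  then show False using nonzero t by force
qed

lemma funpow_mirror:
  fixes f :: "'a::group_add \<Rightarrow> 'a"
  shows "((\<lambda>x. - f (- x)) ^^ n) x = - (f ^^ n) (- x)"
  by (induction n) auto

lemma iterates_increasing_tendsto:
  fixes f :: "real \<Rightarrow> real"
  assumes step: "\<And>z. a < z \<Longrightarrow> z < b \<Longrightarrow> z < f z \<and> f z < b"
    and cont: "\<And>z. a < z \<Longrightarrow> z < b \<Longrightarrow> isCont f z"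
    and z0: "a < z0" "z0 < b"
  shows "(\<forall>n. (f ^^ n) z0 \<in> {a<..<b}) \<and> incseq (\<lambda>n. (f ^^ n) z0) \<and> (\<lambda>n. (f ^^ n) z0) \<longlonglongrightarrow> b"
proof -
  define s where "s n = (f ^^ n) z0" for n
  have s_Suc: "s (Suc n) = f (s n)" for n unfolding s_def by simp
  have s_in: "a < s n \<and> s n < b" for n
  proof (induction n)
    case 0 then show ?case using z0 unfolding s_def by simp
  next
    case (Suc n) then show ?case using step[of "s n"] s_Suc[of n] by force
  qed
  have "incseq s" using step s_in s_Suc by (intro incseq_SucI) (simp add: less_imp_le)
  moreover have "bdd_above (range s)" using s_in by (intro bdd_aboveI[of _ b]) (auto intro: less_imp_le)
  ultimately obtain L where lim: "s \<longlonglongrightarrow> L" using LIMSEQ_incseq_SUP by blast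
  have "L = b"
  proof (rule ccontr)
    assume "L \<noteq> b"
    moreover have "L \<le> b" using s_in by (intro LIMSEQ_le_const2[OF lim]) (auto intro: less_imp_le)
    moreover have "s 0 \<le> L" using incseq_le[OF \<open>incseq s\<close> lim] by simp
    ultimately have L: "a < L" "L < b" using s_in[of 0] by auto
    have "(\<lambda>n. f (s n)) \<longlonglongrightarrow> f L" using isCont_tendsto_compose[OF cont[OF L] lim] .
    moreover have "(\<lambda>n. f (s n)) \<longlonglongrightarrow> L" using LIMSEQ_Suc[OF lim] unfolding s_Suc .
    ultimately have "f L = L" by (rule LIMSEQ_unique)
    then show False using step[OF L] by simp
  qed
  then show ?thesis using s_in \<open>incseq s\<close> lim unfolding s_def by auto
qed

lemma iterates_decreasing_tendsto:
  fixes f :: "real \<Rightarrow> real"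
  assumes step: "\<And>z. a < z \<Longrightarrow> z < b \<Longrightarrow> a < f z \<and> f z < z"
    and cont: "\<And>z. a < z \<Longrightarrow> z < b \<Longrightarrow> isCont f z"
    and z0: "a < z0" "z0 < b"
  shows "(\<forall>n. (f ^^ n) z0 \<in> {a<..<b}) \<and> decseq (\<lambda>n. (f ^^ n) z0) \<and> (\<lambda>n. (f ^^ n) z0) \<longlonglongrightarrow> a"
proof -
  let ?g = "\<lambda>x. - f (- x)"
  have "(\<forall>n. (?g ^^ n) (- z0) \<in> {- b<..<- a}) \<and> incseq (\<lambda>n. (?g ^^ n) (- z0))
        \<and> (\<lambda>n. (?g ^^ n) (- z0)) \<longlonglongrightarrow> - a"
  proof (rule iterates_increasing_tendsto)
    fix z assume "- b < z" "z < - a"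
    then show "z < ?g z \<and> ?g z < - a" using step[of "- z"] by auto
    have "isCont (\<lambda>x. f (- x)) z"
      using \<open>- b < z\<close> \<open>z < - a\<close> by (intro isCont_o2[OF isCont_minus[OF continuous_ident] cont]) auto
    then show "isCont ?g z" by (rule isCont_minus)
  qed (use z0 in auto)
  then show ?thesis
    unfolding funpow_mirror minus_minus decseq_eq_incseq[symmetric]
    by (auto simp: tendsto_minus_cancel_left)
qed

locale riccati_unique_zero =
  fixes r h :: "real \<Rightarrow> real" and zw zw' zs :: real
  assumes r_cont: "\<And>z. zw < z \<Longrightarrow> z < zw' \<Longrightarrow> isCont r z"
    and r_noninc: "\<And>x y. zw < x \<Longrightarrow> x \<le> y \<Longrightarrow> y < zw' \<Longrightarrow> r y \<le> r x"
    and h_ode: "\<And>z. zw < z \<Longrightarrow> z < zw' \<Longrightarrow>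
                  (h has_real_derivative 1 + (h z)^2 - 2 * r z * h z) (at z)"
    and zs_in: "zw < zs" "zs < zw'"
    and zs_zero: "h zs = 0"
    and zs_unique: "\<And>z. zw < z \<Longrightarrow> z < zw' \<Longrightarrow> h z = 0 \<Longrightarrow> z = zs"
begin

lemma h_continuous_on:
  assumes "zw < a" "b < zw'"
  shows "continuous_on {a..b} h"
proof (intro continuous_at_imp_continuous_on ballI)
  fix x assume "x \<in> {a..b}"
  then show "isCont h x" using assms by (intro DERIV_isCont[OF h_ode]) auto
qed

lemma h_deriv_zs: "(h has_real_derivative 1) (at zs)"
  using h_ode[OF zs_in] zs_zero by simp

lemma h_neg_left:
  assumes "zw < w" "w < zs"
  shows "h w < 0"
proof (rule neg_before_simple_zero[OF \<open>w < zs\<close> _ h_deriv_zs _ zs_zero])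
  show "continuous_on {w..zs} h" by (rule h_continuous_on) (use assms zs_in in auto)
  fix x assume "w \<le> x" "x < zs"
  then have "zw < x" "x < zw'" "x \<noteq> zs" using assms zs_in by auto
  then show "h x \<noteq> 0" using zs_unique by blast
qed simp

lemma h_pos_right:
  assumes "zs < w" "w < zw'"
  shows "0 < h w"
proof (rule pos_after_simple_zero[OF \<open>zs < w\<close> _ h_deriv_zs _ zs_zero])
  show "continuous_on {zs..w} h" by (rule h_continuous_on) (use assms zs_in in auto)
  fix x assume "zs < x" "x \<le> w"
  then have "zw < x" "x < zw'" "x \<noteq> zs" using assms zs_in by auto
  then show "h x \<noteq> 0" using zs_unique by blast
qed simp

lemma iter_G_isCont:
  assumes "zw < z" "z < zw'" "iter_denom r h z \<noteq> 0"
  shows "isCont (iter_G r h) z"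
  using DERIV_isCont[OF h_ode[OF assms(1,2)]] r_cont[OF assms(1,2)] assms(3)
  unfolding iter_G_def[abs_def] iter_denom_def by (intro continuous_intros) auto

lemma iter_G_eq_iter_G_const: "iter_G r h z = iter_G (\<lambda>_. r z) h z"
  by (simp add: iter_G_def iter_denom_def)

lemma iter_G_const_zs: "iter_G (\<lambda>_. c) h zs = zs"
  using zs_zero by (simp add: iter_G_def)

lemma iter_G_step_left:
  assumes r_pos: "\<And>z. zw < z \<Longrightarrow> z < zs \<Longrightarrow> 0 < r z" and z: "zw < z" "z < zs"
  shows "0 < iter_denom r h z \<and> z < iter_G r h z \<and> iter_G r h z < zs"
proof -
  have h_nonpos: "h w \<le> 0" if "z \<le> w" "w \<le> zs" for w
    using h_neg_left[of w] zs_zero that z by (cases "w = zs") auto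
  have denom: "0 < iter_denom r h z"
    using r_pos[OF z] h_neg_left[OF z] by (intro iter_denom_pos mult_nonneg_nonpos) auto
  then have "z < iter_G r h z"
    using h_neg_left[OF z] unfolding iter_G_def by (simp add: divide_neg_pos)
  moreover have "iter_G (\<lambda>_. r z) h z < iter_G (\<lambda>_. r z) h zs"
  proof (rule iter_G_const_increasing[OF \<open>z < zs\<close>,
        where h' = "\<lambda>w. 1 + (h w)^2 - 2 * r w * h w"])
    fix w assume w: "z \<le> w" "w \<le> zs"
    show "(h has_real_derivative 1 + (h w)^2 - 2 * r w * h w) (at w)"
      using h_ode w z zs_in by simp
    show "r z * h w \<le> 0" using r_pos[OF z] h_nonpos[OF w] by (simp add: mult_nonneg_nonpos)
  next
    fix w assume w: "z < w" "w < zs"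
    have "h w < 0" using h_neg_left w z by simp
    then show "h w \<noteq> 0" by simp
    have "r w * h w \<le> 0" using r_pos[of w] \<open>h w < 0\<close> w z by (simp add: mult_pos_neg less_imp_le)
    moreover have "r z * h w \<le> r w * h w"
      using r_noninc[of z w] \<open>h w < 0\<close> w z zs_in by (simp add: mult_right_mono_neg)
    ultimately show "0 \<le> 1 + (h w)^2 - 2 * r w * h w \<and>
                     1 + (h w)^2 - 2 * r w * h w \<le> 1 + (h w)^2 - 2 * r z * h w"
      using zero_le_power2[of "h w"] by linarith
  qed
  moreover have "iter_G r h z = iter_G (\<lambda>_. r z) h z" by (rule iter_G_eq_iter_G_const)
  ultimately show ?thesis using denom iter_G_const_zs[of "r z"] by simp
qed

lemma iter_G_step_right:
  assumes r_neg: "\<And>z. zs < z \<Longrightarrow> z < zw' \<Longrightarrow> r z < 0" and z: "zs < z" "z < zw'"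
  shows "0 < iter_denom r h z \<and> zs < iter_G r h z \<and> iter_G r h z < z"
proof -
  have h_nonneg: "0 \<le> h w" if "zs \<le> w" "w \<le> z" for w
    using h_pos_right[of w] zs_zero that z by (cases "w = zs") auto
  have denom: "0 < iter_denom r h z"
    using r_neg[OF z] h_pos_right[OF z] by (intro iter_denom_pos mult_nonpos_nonneg) auto
  then have "iter_G r h z < z"
    using h_pos_right[OF z] unfolding iter_G_def by simp
  moreover have "iter_G (\<lambda>_. r z) h zs < iter_G (\<lambda>_. r z) h z"
  proof (rule iter_G_const_increasing[OF \<open>zs < z\<close>,
        where h' = "\<lambda>w. 1 + (h w)^2 - 2 * r w * h w"])
    fix w assume w: "zs \<le> w" "w \<le> z"
    show "(h has_real_derivative 1 + (h w)^2 - 2 * r w * h w) (at w)"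
      using h_ode w z zs_in by simp
    show "r z * h w \<le> 0" using r_neg[OF z] h_nonneg[OF w] by (simp add: mult_nonpos_nonneg)
  next
    fix w assume w: "zs < w" "w < z"
    have "0 < h w" using h_pos_right w z by simp
    then show "h w \<noteq> 0" by simp
    have "r w * h w \<le> 0" using r_neg[of w] \<open>0 < h w\<close> w z by (simp add: mult_neg_pos less_imp_le)
    moreover have "r z * h w \<le> r w * h w"
      using r_noninc[of w z] \<open>0 < h w\<close> w z zs_in by (simp add: mult_right_mono)
    ultimately show "0 \<le> 1 + (h w)^2 - 2 * r w * h w \<and>
                     1 + (h w)^2 - 2 * r w * h w \<le> 1 + (h w)^2 - 2 * r z * h w"
      using zero_le_power2[of "h w"] by linarith
  qed
  moreover have "iter_G r h z = iter_G (\<lambda>_. r z) h z" by (rule iter_G_eq_iter_G_const)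
  ultimately show ?thesis using denom iter_G_const_zs[of "r z"] by simp
qed

lemma iterates_converge_left:
  assumes r_pos: "\<forall>z\<in>{zw<..<zs}. r z > 0" and z0: "z0 \<in> {zw<..<zs}"
  shows "(\<forall>n. (iter_G r h ^^ n) z0 \<in> {zw<..<zs} \<and> iter_denom r h ((iter_G r h ^^ n) z0) \<noteq> 0)
         \<and> incseq (\<lambda>n. (iter_G r h ^^ n) z0) \<and> (\<lambda>n. (iter_G r h ^^ n) z0) \<longlonglongrightarrow> zs"
proof -
  have step: "0 < iter_denom r h z \<and> z < iter_G r h z \<and> iter_G r h z < zs"
    if "zw < z" "z < zs" for z
    by (rule iter_G_step_left) (use r_pos that in auto)
  have "(\<forall>n. (iter_G r h ^^ n) z0 \<in> {zw<..<zs}) \<and> incseq (\<lambda>n. (iter_G r h ^^ n) z0)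
        \<and> (\<lambda>n. (iter_G r h ^^ n) z0) \<longlonglongrightarrow> zs"
  proof (rule iterates_increasing_tendsto)
    fix z assume z: "zw < z" "z < zs"
    then show "z < iter_G r h z \<and> iter_G r h z < zs" using step by simp
    show "isCont (iter_G r h) z" using step[OF z] z zs_in by (intro iter_G_isCont) auto
  qed (use z0 in auto)
  moreover have "iter_denom r h ((iter_G r h ^^ n) z0) \<noteq> 0" for n
    using calculation step[of "(iter_G r h ^^ n) z0"] by auto
  ultimately show ?thesis by blast
qed

lemma iterates_converge_right:
  assumes r_neg: "\<forall>z\<in>{zs<..<zw'}. r z < 0" and z0: "z0 \<in> {zs<..<zw'}"
  shows "(\<forall>n. (iter_G r h ^^ n) z0 \<in> {zs<..<zw'} \<and> iter_denom r h ((iter_G r h ^^ n) z0) \<noteq> 0)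
         \<and> decseq (\<lambda>n. (iter_G r h ^^ n) z0) \<and> (\<lambda>n. (iter_G r h ^^ n) z0) \<longlonglongrightarrow> zs"
proof -
  have step: "0 < iter_denom r h z \<and> zs < iter_G r h z \<and> iter_G r h z < z"
    if "zs < z" "z < zw'" for z
    by (rule iter_G_step_right) (use r_neg that in auto)
  have "(\<forall>n. (iter_G r h ^^ n) z0 \<in> {zs<..<zw'}) \<and> decseq (\<lambda>n. (iter_G r h ^^ n) z0)
        \<and> (\<lambda>n. (iter_G r h ^^ n) z0) \<longlonglongrightarrow> zs"
  proof (rule iterates_decreasing_tendsto)
    fix z assume z: "zs < z" "z < zw'"
    then show "zs < iter_G r h z \<and> iter_G r h z < z" using step by simp
    show "isCont (iter_G r h) z" using step[OF z] z zs_in by (intro iter_G_isCont) auto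
  qed (use z0 in auto)
  moreover have "iter_denom r h ((iter_G r h ^^ n) z0) \<noteq> 0" for n
    using calculation step[of "(iter_G r h ^^ n) z0"] by auto
  ultimately show ?thesis by blast
qed

end

theorem theorem3p2:
  fixes r h :: "real \<Rightarrow> real" and zw zw' zs :: real
  assumes interval: "zw < zw'"
    and r_diff: "\<forall>z\<in>{zw<..<zw'}. r differentiable (at z)"
    and r_noninc: "\<forall>x\<in>{zw<..<zw'}. \<forall>y\<in>{zw<..<zw'}. x \<le> y \<longrightarrow> r y \<le> r x"
    and h_ode: "\<forall>z\<in>{zw<..<zw'}. (h has_real_derivative (1 + (h z)^2 - 2 * r z * h z)) (at z)"
    and zs_in: "zs \<in> {zw<..<zw'}"
    and zs_zero: "h zs = 0"
    and zs_unique: "\<forall>z\<in>{zw<..<zw'}. h z = 0 \<longrightarrow> z = zs"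
  shows
    "((\<forall>z\<in>{zw<..<zs}. r z > 0) \<longrightarrow>
       (\<forall>z0\<in>{zw<..<zs}.
          (\<forall>n. (iter_G r h ^^ n) z0 \<in> {zw<..<zs} \<and> iter_denom r h ((iter_G r h ^^ n) z0) \<noteq> 0)
          \<and> incseq (\<lambda>n. (iter_G r h ^^ n) z0)
          \<and> (\<lambda>n. (iter_G r h ^^ n) z0) \<longlonglongrightarrow> zs))
     \<and>
     ((\<forall>z\<in>{zs<..<zw'}. r z < 0) \<longrightarrow>
       (\<forall>z0\<in>{zs<..<zw'}.
          (\<forall>n. (iter_G r h ^^ n) z0 \<in> {zs<..<zw'} \<and> iter_denom r h ((iter_G r h ^^ n) z0) \<noteq> 0)
          \<and> decseq (\<lambda>n. (iter_G r h ^^ n) z0)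
          \<and> (\<lambda>n. (iter_G r h ^^ n) z0) \<longlonglongrightarrow> zs))"
proof -
  interpret riccati_unique_zero r h zw zw' zs
  proof
    show "isCont r z" if "zw < z" "z < zw'" for z
      using r_diff that by (simp add: differentiable_imp_continuous_within)
    show "r y \<le> r x" if "zw < x" "x \<le> y" "y < zw'" for x y
      using r_noninc that by simp
    show "(h has_real_derivative 1 + (h z)^2 - 2 * r z * h z) (at z)" if "zw < z" "z < zw'" for z
      using h_ode that by simp
    show "z = zs" if "zw < z" "z < zw'" "h z = 0" for z
      using zs_unique that by simp
  qed (use zs_in zs_zero in auto)
  show ?thesis using iterates_converge_left iterates_converge_right by blast
qed

end
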